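(* For every $\epsilon\in[0,1]$ and every unweighted congestion game $\mathcal{G}$ with affine latency functions, $\epsilon\text{-PoS}(\mathcal{G})\le\frac{1+\sqrt{3}}{\epsilon+\sqrt{3}}$.
   Context: A weighted congestion game consists of a finite set $[n]=\{1,\dots,n\}$ of players, a finite set $E$ of resources, for each player $i$ a weight $w_i>0$ and a nonempty finite strategy set $\Sigma_i\subseteq 2^E$, and for each resource $e$ a latency function $\ell_e:\mathbb{R}_{\ge 0}\to\mathbb{R}_{\ge 0}$. It is unweighted if $w_i=1$ for all $i$. Affine latency functions means $\ell_e(x)=\alpha_e x+\beta_e$ with $\alpha_e,\beta_e\ge 0$. For a strategy profile $S=(s_1,\dots,s_n)\in\prod_i\Sigma_i$, the congestion of $e$ is $L_e(S)=\sum_{i:\,e\in s_i}w_i$, the cost of player $i$ is $c_i(S)=\sum_{e\in s_i}\ell_e(L_e(S))$, and the social cost is $\mathrm{SUM}(S)=\sum_{i\in[n]}c_i(S)$; $S^*$ denotes a profile minimizing $\mathrm{SUM}$. For $t\in\Sigma_i$, $(S_{-i}\diamond t)$ denotes the profile obtained from $S$ by replacing $s_i$ with $t$. For $\epsilon\ge 0$, $S$ is an $\epsilon$-approximate pure Nash equilibrium ($\epsilon$-PNE) if $c_i(S)\le(1+\epsilon)c_i(S_{-i}\diamond t)$ for all $i\in[n]$ and all $t\in\Sigma_i$. The $\epsilon$-approximate price of stability is $\epsilon\text{-PoS}(\mathcal{G})=\min_{S\ \epsilon\text{-PNE}}\mathrm{SUM}(S)/\mathrm{SUM}(S^* )$.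 *)

theory Defs
  imports Complex_Main
begin

text \<open>Congestion games with players 0..n-1, resources of type 'e.
  A strategy profile is a function S :: nat => 'e set (values at i >= n are irrelevant).\<close>

definition is_profile :: "nat \<Rightarrow> (nat \<Rightarrow> 'e set set) \<Rightarrow> (nat \<Rightarrow> 'e set) \<Rightarrow> bool" where
  "is_profile n Sig S \<longleftrightarrow> (\<forall>i<n. S i \<in> Sig i)"

definition congestion :: "nat \<Rightarrow> (nat \<Rightarrow> real) \<Rightarrow> (nat \<Rightarrow> 'e set) \<Rightarrow> 'e \<Rightarrow> real" where
  "congestion n w S e = (\<Sum>i\<in>{i. i < n \<and> e \<in> S i}. w i)"

definition player_cost :: "nat \<Rightarrow> (nat \<Rightarrow> real) \<Rightarrow> ('e \<Rightarrow> real \<Rightarrow> real) \<Rightarrow> (nat \<Rightarrow> 'e set) \<Rightarrow> nat \<Rightarrow> real" where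
  "player_cost n w lat S i = (\<Sum>e\<in>S i. lat e (congestion n w S e))"

definition social_cost :: "nat \<Rightarrow> (nat \<Rightarrow> real) \<Rightarrow> ('e \<Rightarrow> real \<Rightarrow> real) \<Rightarrow> (nat \<Rightarrow> 'e set) \<Rightarrow> real" where
  "social_cost n w lat S = (\<Sum>i<n. player_cost n w lat S i)"

text \<open>epsilon-approximate pure Nash equilibrium; (S_{-i} <> t) is S(i := t).\<close>
definition is_eps_PNE :: "real \<Rightarrow> nat \<Rightarrow> (nat \<Rightarrow> real) \<Rightarrow> (nat \<Rightarrow> 'e set set) \<Rightarrow> ('e \<Rightarrow> real \<Rightarrow> real) \<Rightarrow> (nat \<Rightarrow> 'e set) \<Rightarrow> bool" where
  "is_eps_PNE eps n w Sig lat S \<longleftrightarrow> is_profile n Sig S \<and>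
     (\<forall>i<n. \<forall>t\<in>Sig i. player_cost n w lat S i \<le> (1 + eps) * player_cost n w lat (S(i := t)) i)"

definition congestion_game :: "nat \<Rightarrow> 'e set \<Rightarrow> (nat \<Rightarrow> real) \<Rightarrow> (nat \<Rightarrow> 'e set set) \<Rightarrow> bool" where
  "congestion_game n E w Sig \<longleftrightarrow> finite E \<and>
     (\<forall>i<n. w i > 0 \<and> Sig i \<noteq> {} \<and> finite (Sig i) \<and> (\<forall>s\<in>Sig i. s \<subseteq> E))"


end

theory Submission
  imports Defs "HOL-Library.FuncSet"
begin

(* Proof idea: minimise an approximate potential.
   For eps in [0,1] consider the approximate potential
     Phi(S) = sum over resources e of  alpha_e ((1+eps)/2 L_e^2 + (1-eps)/2 L_e) + beta_e L_e,
   where L_e is the load of e under S.  A profile N minimising Phi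
   (1) is an eps-PNE, because a unilateral deviation changes Phi by at most (1+eps) times the
       new cost of the deviator minus its old cost; and
   (2) satisfies two inequalities against any profile Q: the global one Phi(N) <= Phi(Q), and a
       local one obtained by summing the deviations of each player i from N_i to Q_i.
   A per-resource inequality, whose heart is the nonnegativity of a quadratic form in the
   (natural) loads involving sqrt 3, combines both with nonnegative weights into
     SC(N) <= (1 + sqrt 3)/(eps + sqrt 3) * SC(Q). *)

(* Per-resource term of the approximate potential: for load z,
   a ((1+eps)/2 z^2 + (1-eps)/2 z) + b z.  For eps = 0 it is Rosenthal's potential of the
   affine latency a x + b. *)
definition pot_term :: "real \<Rightarrow> real \<Rightarrow> real \<Rightarrow> real \<Rightarrow> real" where
  "pot_term eps a b z = a * ((1 + eps) / 2 * z\<^sup>2 + (1 - eps) / 2 * z) + b * z"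

lemma pot_term_step:
  "pot_term eps a b (z + 1) - pot_term eps a b z = a * ((1 + eps) * z + 1) + b"
  unfolding pot_term_def by (simp add: power2_eq_square field_simps)

(* A player leaving (x) or joining (y) a resource of load M changes the potential term by at
   most (1+eps) times its new latency there minus its old latency: this makes every
   minimiser of the potential an eps-approximate equilibrium. *)
lemma pot_term_deviation_cost:
  assumes "0 \<le> M" "0 \<le> a" "0 \<le> b" "0 \<le> eps"
  shows "pot_term eps a b (M + of_bool y) - pot_term eps a b (M + of_bool x)
     \<le> of_bool y * ((1 + eps) * (a * (M + of_bool y) + b)) - of_bool x * (a * (M + of_bool x) + b)"
proof -
  have "0 \<le> eps * (a * M)" "0 \<le> eps * (a * (M + 1) + b)" "0 \<le> eps * (a + b)"
    using assms by simp_all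
  then show ?thesis
    using pot_term_step[of eps a b M] by (cases x; cases y) (simp_all add: algebra_simps)
qed

(* The same change bounded by marginal quantities that depend only on the old load
   K = M + [x]; summed over all players this gives the "local" inequality of a minimiser. *)
lemma pot_term_deviation_linear:
  assumes "0 \<le> a" "0 \<le> eps"
  shows "pot_term eps a b (M + of_bool y) - pot_term eps a b (M + of_bool x)
     \<le> of_bool y * (a * ((1 + eps) * (M + of_bool x) + 1) + b)
       - of_bool x * (a * ((1 + eps) * (M + of_bool x) - eps) + b)"
proof -
  have "0 \<le> a * (1 + eps)" using assms by simp
  then show ?thesis
    using pot_term_step[of eps a b M] by (cases x; cases y) (simp_all add: algebra_simps)
qed

(* The key inequality behind the constant sqrt 3: for natural x, y the quadratic form
   (2-s)x^2 - 2xy + (2+s)y^2 - (2+s)y + sx with s = sqrt 3 is nonnegative.  For y >= 2 it is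
   a completed square plus a positive remainder; the cases y = 0, 1 are direct. *)
lemma sqrt3_quadratic_nonneg:
  fixes x y :: nat
  defines "s \<equiv> sqrt 3"
  shows "0 \<le> (2 - s) * x\<^sup>2 - 2 * x * y + (2 + s) * y\<^sup>2 - (2 + s) * y + s * x"
proof -
  have s2: "s\<^sup>2 = 3" unfolding s_def by simp
  have s_lo: "s > 1.7" unfolding s_def by (rule real_less_rsqrt) (simp add: power2_eq_square)
  have s_hi: "s < 2" unfolding s_def by (rule real_less_lsqrt) (simp_all add: power2_eq_square)
  consider "y = 0" | "y = 1" | "y \<ge> 2" by linarith
  then show ?thesis
  proof cases
    case 1
    then show ?thesis using s_lo s_hi by (simp add: power2_eq_square)
  next
    case 2
    have "real x * (real x - 1) \<ge> 0" by (cases x) auto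
    then have "0 \<le> (2 - s) * (real x * (real x - 1))" using s_hi by simp
    then show ?thesis using 2 by (simp add: power2_eq_square algebra_simps)
  next
    case 3
    define z where "z = real x - (2 + s) * y"
    have expand: "(2 - s) * x\<^sup>2 - 2 * x * y + (2 + s) * y\<^sup>2 - (2 + s) * y + s * x
        = (2 - s) * z\<^sup>2 + s * z + (s + 1) * y + (s\<^sup>2 - 3) * (- 2 * x * y + (2 + s) * y\<^sup>2 + y)"
      unfolding z_def by (simp add: power2_eq_square algebra_simps)
    have square: "4 * (2 - s) * ((2 - s) * x\<^sup>2 - 2 * x * y + (2 + s) * y\<^sup>2 - (2 + s) * y + s * x)
        = (2 * (2 - s) * z + s)\<^sup>2 + 4 * (2 - s) * (s + 1) * y - s\<^sup>2"
      using s2 unfolding expand by (simp add: power2_eq_square algebra_simps)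
    have "4 * (2 - s) * (s + 1) * y \<ge> 4 * (2 - s) * (s + 1) * 2"
      using 3 s_lo s_hi by (intro mult_left_mono) auto
    moreover have "4 * (2 - s) * (s + 1) * 2 \<ge> s\<^sup>2"
      using s2 s_lo s_hi by (simp add: power2_eq_square algebra_simps)
    ultimately have "0 \<le> 4 * (2 - s) * ((2 - s) * x\<^sup>2 - 2 * x * y + (2 + s) * y\<^sup>2 - (2 + s) * y + s * x)"
      unfolding square by (smt (verit) zero_le_power2)
    then show ?thesis using s_hi by (simp add: zero_le_mult_iff)
  qed
qed

(* Per-resource form of the price bound: the cost x(ax+b) at load x, minus rho times the
   cost at optimal load y, is dominated by a nonnegative combination of the potential
   difference and the local-deviation quantity.  The gap is (rho-1)(a H/2 + b x), with H the
   quadratic form above. *)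
lemma resource_cost_bound:
  fixes x y :: nat and a b eps :: real
  defines "s \<equiv> sqrt 3"
  defines "rho \<equiv> (1 + s) / (eps + s)" and "c \<equiv> (1 - eps) / ((1 + eps) * (eps + s))"
  assumes eps: "0 \<le> eps" "eps \<le> 1" and a: "0 \<le> a" and b: "0 \<le> b"
  shows "x * (a * x + b) - rho * (y * (a * y + b))
     \<le> (rho - c) * (pot_term eps a b x - pot_term eps a b y)
       + c * (x * (a * ((1 + eps) * x - eps) + b) - y * (a * ((1 + eps) * x + 1) + b))"
proof -
  have "s > 0" unfolding s_def by simp
  then have pos: "eps + s > 0" "1 + eps > 0" using eps by simp_all
  have "(rho - c) * (pot_term eps a b x - pot_term eps a b y)
       + c * (x * (a * ((1 + eps) * x - eps) + b) - y * (a * ((1 + eps) * x + 1) + b))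
       - (x * (a * x + b) - rho * (y * (a * y + b)))
     = (1 - eps) / (eps + s) * (a / 2 * ((2 - s) * x\<^sup>2 - 2 * x * y + (2 + s) * y\<^sup>2 - (2 + s) * y + s * x) + b * x)"
    using pos unfolding rho_def c_def pot_term_def
    by (simp add: divide_simps) (simp add: power2_eq_square algebra_simps)
  moreover have "0 \<le> (1 - eps) / (eps + s) * (a / 2 * ((2 - s) * x\<^sup>2 - 2 * x * y + (2 + s) * y\<^sup>2 - (2 + s) * y + s * x) + b * x)"
    using sqrt3_quadratic_nonneg[of x y] pos eps a b unfolding s_def by simp
  ultimately show ?thesis by linarith
qed

lemma resource_bound_weights_nonneg:
  fixes eps :: real
  defines "s \<equiv> sqrt 3"
  assumes eps: "0 \<le> eps" "eps \<le> 1"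
  shows "0 \<le> (1 - eps) / ((1 + eps) * (eps + s))"
    and "(1 - eps) / ((1 + eps) * (eps + s)) \<le> (1 + s) / (eps + s)"
proof -
  have "s > 0" unfolding s_def by simp
  then have pos: "0 < eps + s" using eps by simp
  show "0 \<le> (1 - eps) / ((1 + eps) * (eps + s))" using pos eps by simp
  have "eps + s \<le> (1 + eps) * (eps + s)"
    using pos eps by (simp add: distrib_right)
  then have "(1 - eps) / ((1 + eps) * (eps + s)) \<le> (1 - eps) / (eps + s)"
    using pos eps by (intro divide_left_mono) simp_all
  also have "\<dots> \<le> (1 + s) / (eps + s)"
    using pos eps \<open>s > 0\<close> by (simp add: divide_right_mono)
  finally show "(1 - eps) / ((1 + eps) * (eps + s)) \<le> (1 + s) / (eps + s)" .
qed

locale affine_congestion_game =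
  fixes n :: nat and E :: "'e set" and Sig :: "nat \<Rightarrow> 'e set set" and \<alpha> \<beta> :: "'e \<Rightarrow> real"
  assumes finite_resources: "finite E"
    and strategies_nonempty: "\<And>i. i < n \<Longrightarrow> Sig i \<noteq> {}"
    and strategies_finite: "\<And>i. i < n \<Longrightarrow> finite (Sig i)"
    and strategies_resources: "\<And>i s. i < n \<Longrightarrow> s \<in> Sig i \<Longrightarrow> s \<subseteq> E"
    and coefficients_nonneg: "\<And>e. e \<in> E \<Longrightarrow> 0 \<le> \<alpha> e \<and> 0 \<le> \<beta> e"
begin

abbreviation lat :: "'e \<Rightarrow> real \<Rightarrow> real" where
  "lat \<equiv> \<lambda>e x. \<alpha> e * x + \<beta> e"

abbreviation profile :: "(nat \<Rightarrow> 'e set) \<Rightarrow> bool" where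
  "profile S \<equiv> is_profile n Sig S"

abbreviation cost :: "(nat \<Rightarrow> 'e set) \<Rightarrow> nat \<Rightarrow> real" where
  "cost S i \<equiv> player_cost n (\<lambda>_. 1) lat S i"

abbreviation total_cost :: "(nat \<Rightarrow> 'e set) \<Rightarrow> real" where
  "total_cost S \<equiv> social_cost n (\<lambda>_. 1) lat S"

definition load :: "(nat \<Rightarrow> 'e set) \<Rightarrow> 'e \<Rightarrow> real" where
  "load S e = real (card {i. i < n \<and> e \<in> S i})"

definition load_others :: "(nat \<Rightarrow> 'e set) \<Rightarrow> nat \<Rightarrow> 'e \<Rightarrow> real" where
  "load_others S i e = real (card {j. j < n \<and> j \<noteq> i \<and> e \<in> S j})"

definition potential :: "real \<Rightarrow> (nat \<Rightarrow> 'e set) \<Rightarrow> real" where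
  "potential eps S = (\<Sum>e\<in>E. pot_term eps (\<alpha> e) (\<beta> e) (load S e))"

lemma congestion_unit_weights: "congestion n (\<lambda>_. 1) S e = load S e"
  by (simp add: congestion_def load_def)

lemma profile_resources: "profile S \<Longrightarrow> i < n \<Longrightarrow> S i \<subseteq> E"
  using strategies_resources by (auto simp: is_profile_def)

lemma load_split:
  assumes "i < n"
  shows "load S e = load_others S i e + of_bool (e \<in> S i)"
proof -
  have "{j. j < n \<and> e \<in> S j} = {j. j < n \<and> j \<noteq> i \<and> e \<in> S j} \<union> (if e \<in> S i then {i} else {})"
    using assms by auto
  then show ?thesis unfolding load_def load_others_def by (simp add: card_insert_if)
qed

lemma load_update:
  assumes "i < n"
  shows "load (S(i := t)) e = load_others S i e + of_bool (e \<in> t)"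
proof -
  have "load_others (S(i := t)) i e = load_others S i e"
    unfolding load_others_def by (simp cong: conj_cong)
  then show ?thesis using load_split[OF assms, of "S(i := t)"] by simp
qed

lemma player_cost_eq:
  "cost S i = (\<Sum>e\<in>S i. \<alpha> e * load S e + \<beta> e)"
  by (simp add: player_cost_def congestion_unit_weights)

lemma double_counting:
  assumes "\<forall>i<n. S i \<subseteq> E"
  shows "(\<Sum>i<n. \<Sum>e\<in>S i. f e) = (\<Sum>e\<in>E. load S e * f e)"
proof -
  have "E \<inter> {e. e \<in> S i} = S i" if "i < n" for i
    using assms that by auto
  then have "(\<Sum>i<n. \<Sum>e\<in>S i. f e) = (\<Sum>i<n. \<Sum>e\<in>E. of_bool (e \<in> S i) * f e)"
    using finite_resources by simp
  also have "\<dots> = (\<Sum>e\<in>E. (\<Sum>i<n. of_bool (e \<in> S i)) * f e)"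
    by (subst sum.swap) (simp add: sum_distrib_right)
  also have "\<dots> = (\<Sum>e\<in>E. load S e * f e)"
    by (simp add: load_def Int_def)
  finally show ?thesis .
qed

lemma total_cost_eq:
  assumes "\<forall>i<n. S i \<subseteq> E"
  shows "total_cost S = (\<Sum>e\<in>E. load S e * (\<alpha> e * load S e + \<beta> e))"
  unfolding social_cost_def player_cost_eq using double_counting[OF assms] .

lemma potential_deviation_cost:
  assumes i: "i < n" and "S i \<subseteq> E" "t \<subseteq> E" and eps: "0 \<le> eps"
  shows "potential eps (S(i := t)) - potential eps S \<le> (1 + eps) * cost (S(i := t)) i - cost S i"
proof -
  have "potential eps (S(i := t)) - potential eps S
      = (\<Sum>e\<in>E. pot_term eps (\<alpha> e) (\<beta> e) (load (S(i := t)) e) - pot_term eps (\<alpha> e) (\<beta> e) (load S e))"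
    by (simp add: potential_def sum_subtractf)
  also have "\<dots> \<le> (\<Sum>e\<in>E. of_bool (e \<in> t) * ((1 + eps) * (\<alpha> e * load (S(i := t)) e + \<beta> e))
                        - of_bool (e \<in> S i) * (\<alpha> e * load S e + \<beta> e))"
  proof (rule sum_mono)
    fix e assume "e \<in> E"
    then show "pot_term eps (\<alpha> e) (\<beta> e) (load (S(i := t)) e) - pot_term eps (\<alpha> e) (\<beta> e) (load S e)
        \<le> of_bool (e \<in> t) * ((1 + eps) * (\<alpha> e * load (S(i := t)) e + \<beta> e))
           - of_bool (e \<in> S i) * (\<alpha> e * load S e + \<beta> e)"
      unfolding load_update[OF i] load_split[OF i, of S]
      using coefficients_nonneg eps by (intro pot_term_deviation_cost) (auto simp: load_others_def)
  qed
  also have "\<dots> = (1 + eps) * cost (S(i := t)) i - cost S i"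
    using assms finite_resources
    by (simp add: player_cost_eq sum_subtractf sum_distrib_left Int_absorb1)
  finally show ?thesis .
qed

lemma potential_deviation_linear:
  assumes i: "i < n" and "S i \<subseteq> E" "t \<subseteq> E" and eps: "0 \<le> eps"
  shows "potential eps (S(i := t)) - potential eps S
    \<le> (\<Sum>e\<in>t. \<alpha> e * ((1 + eps) * load S e + 1) + \<beta> e)
      - (\<Sum>e\<in>S i. \<alpha> e * ((1 + eps) * load S e - eps) + \<beta> e)"
proof -
  have "potential eps (S(i := t)) - potential eps S
      = (\<Sum>e\<in>E. pot_term eps (\<alpha> e) (\<beta> e) (load (S(i := t)) e) - pot_term eps (\<alpha> e) (\<beta> e) (load S e))"
    by (simp add: potential_def sum_subtractf)
  also have "\<dots> \<le> (\<Sum>e\<in>E. of_bool (e \<in> t) * (\<alpha> e * ((1 + eps) * load S e + 1) + \<beta> e)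
                        - of_bool (e \<in> S i) * (\<alpha> e * ((1 + eps) * load S e - eps) + \<beta> e))"
  proof (rule sum_mono)
    fix e assume "e \<in> E"
    then show "pot_term eps (\<alpha> e) (\<beta> e) (load (S(i := t)) e) - pot_term eps (\<alpha> e) (\<beta> e) (load S e)
        \<le> of_bool (e \<in> t) * (\<alpha> e * ((1 + eps) * load S e + 1) + \<beta> e)
           - of_bool (e \<in> S i) * (\<alpha> e * ((1 + eps) * load S e - eps) + \<beta> e)"
      unfolding load_update[OF i] load_split[OF i, of S]
      using coefficients_nonneg eps by (intro pot_term_deviation_linear) auto
  qed
  also have "\<dots> = (\<Sum>e\<in>t. \<alpha> e * ((1 + eps) * load S e + 1) + \<beta> e)
                 - (\<Sum>e\<in>S i. \<alpha> e * ((1 + eps) * load S e - eps) + \<beta> e)"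
    using assms finite_resources by (simp add: sum_subtractf Int_absorb1)
  finally show ?thesis .
qed

definition potential_minimizer :: "real \<Rightarrow> (nat \<Rightarrow> 'e set) \<Rightarrow> bool" where
  "potential_minimizer eps N \<longleftrightarrow> profile N \<and> (\<forall>S. profile S \<longrightarrow> potential eps N \<le> potential eps S)"

(* Minimisers exist: the potential only depends on the strategies of players below n,
   and there are finitely many such choices. *)
lemma potential_minimizer_exists: "\<exists>N. potential_minimizer eps N"
proof -
  let ?P = "Pi\<^sub>E {..<n} Sig"
  have "finite ?P" using strategies_finite by (intro finite_PiE) auto
  moreover have "?P \<noteq> {}" using strategies_nonempty by (simp add: PiE_eq_empty_iff)
  ultimately obtain N where N: "is_arg_min (potential eps) (\<lambda>S. S \<in> ?P) N"
    by (metis ex_is_arg_min_if_finite)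
  have N_min: "potential eps N \<le> potential eps S" if "S \<in> ?P" for S
    using N that by (simp add: is_arg_min_linorder)
  have "profile N" using N by (auto simp: is_arg_min_def is_profile_def)
  moreover have "potential eps N \<le> potential eps S" if "profile S" for S
  proof -
    have "restrict S {..<n} \<in> ?P" using that by (simp add: is_profile_def)
    moreover have "potential eps (restrict S {..<n}) = potential eps S"
      unfolding potential_def load_def by (simp cong: conj_cong)
    ultimately show ?thesis using N_min by metis
  qed
  ultimately show ?thesis unfolding potential_minimizer_def by blast
qed

lemma profile_update: "profile S \<Longrightarrow> t \<in> Sig i \<Longrightarrow> profile (S(i := t))"
  by (simp add: is_profile_def)

lemma minimizer_is_eps_PNE:
  assumes eps: "0 \<le> eps" and N: "potential_minimizer eps N"
  shows "is_eps_PNE eps n (\<lambda>_. 1) Sig lat N"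
  unfolding is_eps_PNE_def
proof (intro conjI allI impI ballI)
  show "profile N" using N unfolding potential_minimizer_def by blast
  fix i t assume i: "i < n" and t: "t \<in> Sig i"
  have "0 \<le> potential eps (N(i := t)) - potential eps N"
    using N profile_update[OF _ t] unfolding potential_minimizer_def by fastforce
  also have "\<dots> \<le> (1 + eps) * cost (N(i := t)) i - cost N i"
    using potential_deviation_cost[OF i _ _ eps] profile_resources[OF \<open>profile N\<close> i]
      strategies_resources[OF i t] by blast
  finally show "cost N i \<le> (1 + eps) * cost (N(i := t)) i" by simp
qed

(* Letting every player i in turn deviate from the minimiser N to its strategy in Q and
   summing: sum_e load N e * Y e <= sum_e load Q e * X e. *)
lemma minimizer_local_bound:
  assumes eps: "0 \<le> eps" and N: "potential_minimizer eps N" and Q: "profile Q"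
  shows "(\<Sum>e\<in>E. load N e * (\<alpha> e * ((1 + eps) * load N e - eps) + \<beta> e))
       \<le> (\<Sum>e\<in>E. load Q e * (\<alpha> e * ((1 + eps) * load N e + 1) + \<beta> e))"
proof -
  have NE: "\<forall>i<n. N i \<subseteq> E" and QE: "\<forall>i<n. Q i \<subseteq> E"
    using N Q profile_resources unfolding potential_minimizer_def by blast+
  have "0 \<le> (\<Sum>i<n. potential eps (N(i := Q i)) - potential eps N)"
    using N Q profile_update by (intro sum_nonneg) (fastforce simp: potential_minimizer_def is_profile_def)
  also have "\<dots> \<le> (\<Sum>i<n. (\<Sum>e\<in>Q i. \<alpha> e * ((1 + eps) * load N e + 1) + \<beta> e)
                       - (\<Sum>e\<in>N i. \<alpha> e * ((1 + eps) * load N e - eps) + \<beta> e))"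
    using NE QE eps by (intro sum_mono potential_deviation_linear) auto
  also have "\<dots> = (\<Sum>e\<in>E. load Q e * (\<alpha> e * ((1 + eps) * load N e + 1) + \<beta> e))
                 - (\<Sum>e\<in>E. load N e * (\<alpha> e * ((1 + eps) * load N e - eps) + \<beta> e))"
    by (simp add: sum_subtractf double_counting[OF NE] double_counting[OF QE])
  finally show ?thesis by simp
qed

(* Cost of a minimiser: combine the per-resource bound with weights rho - c >= 0 on the global
   minimality potential N <= potential Q and c >= 0 on the local inequality. *)
lemma minimizer_cost_bound:
  assumes eps: "0 \<le> eps" "eps \<le> 1" and N: "potential_minimizer eps N" and Q: "profile Q"
  shows "total_cost N \<le> (1 + sqrt 3) / (eps + sqrt 3) * total_cost Q"
proof -
  define rho where "rho = (1 + sqrt 3) / (eps + sqrt 3)"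
  define c where "c = (1 - eps) / ((1 + eps) * (eps + sqrt 3))"
  define X where "X e = \<alpha> e * ((1 + eps) * load N e + 1) + \<beta> e" for e
  define Y where "Y e = \<alpha> e * ((1 + eps) * load N e - eps) + \<beta> e" for e
  have NE: "\<forall>i<n. N i \<subseteq> E" and QE: "\<forall>i<n. Q i \<subseteq> E"
    using N Q profile_resources unfolding potential_minimizer_def by blast+
  have c: "0 \<le> c" "c \<le> rho"
    using resource_bound_weights_nonneg[OF eps] unfolding rho_def c_def by simp_all
  have per_resource: "load N e * (\<alpha> e * load N e + \<beta> e) - rho * (load Q e * (\<alpha> e * load Q e + \<beta> e))
      \<le> (rho - c) * (pot_term eps (\<alpha> e) (\<beta> e) (load N e) - pot_term eps (\<alpha> e) (\<beta> e) (load Q e))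
        + c * (load N e * Y e - load Q e * X e)" if "e \<in> E" for e
    using resource_cost_bound[OF eps, of "\<alpha> e" "\<beta> e"] coefficients_nonneg[OF that]
    unfolding rho_def c_def X_def Y_def load_def by simp
  have "total_cost N - rho * total_cost Q
      \<le> (rho - c) * (potential eps N - potential eps Q)
        + c * ((\<Sum>e\<in>E. load N e * Y e) - (\<Sum>e\<in>E. load Q e * X e))"
    using sum_mono[OF per_resource]
    by (simp add: total_cost_eq[OF NE] total_cost_eq[OF QE] potential_def
        sum_subtractf sum.distrib sum_distrib_left right_diff_distrib)
  moreover have "(rho - c) * (potential eps N - potential eps Q) \<le> 0"
    using c N Q unfolding potential_minimizer_def by (simp add: mult_nonneg_nonpos)
  moreover have "c * ((\<Sum>e\<in>E. load N e * Y e) - (\<Sum>e\<in>E. load Q e * X e)) \<le> 0"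
    using c minimizer_local_bound[OF eps(1) N Q] unfolding X_def Y_def
    by (simp add: mult_nonneg_nonpos)
  ultimately show ?thesis unfolding rho_def by linarith
qed

end

theorem mainTheorem4:
  fixes n :: nat and E :: "'e set" and Sig :: "nat \<Rightarrow> 'e set set"
    and \<alpha> \<beta> :: "'e \<Rightarrow> real" and eps :: real
  assumes eps: "0 \<le> eps" "eps \<le> 1"
    and game: "congestion_game n E (\<lambda>_. 1) Sig"
    and aff: "\<forall>e\<in>E. 0 \<le> \<alpha> e \<and> 0 \<le> \<beta> e"
  shows "\<exists>S. is_eps_PNE eps n (\<lambda>_. 1) Sig (\<lambda>e x. \<alpha> e * x + \<beta> e) S \<and>
           (\<forall>S'. is_profile n Sig S' \<longrightarrow>
              social_cost n (\<lambda>_. 1) (\<lambda>e x. \<alpha> e * x + \<beta> e) S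
                \<le> (1 + sqrt 3) / (eps + sqrt 3) * social_cost n (\<lambda>_. 1) (\<lambda>e x. \<alpha> e * x + \<beta> e) S')"
proof -
  interpret affine_congestion_game n E Sig \<alpha> \<beta>
    using game aff by unfold_locales (auto simp: congestion_game_def)
  obtain N where N: "potential_minimizer eps N"
    using potential_minimizer_exists by blast
  show ?thesis
    using minimizer_is_eps_PNE[OF eps(1) N] minimizer_cost_bound[OF eps N] by blast
qed

end
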